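(* Let $\kappa=[2\ell]$ with $\ell\in\mathbb Z$. Then $g^{(n)}(\kappa)\in\mathbb Z[q,q^{-1}]$ for all $n\ge0$.
   Context: $q$ is an indeterminate, $[n]=\frac{q^n-q^{-n}}{q-q^{-1}}$ for $n\in\mathbb Z$, $[n]!=[1]\cdots[n]$, $[0]!=1$. The polynomials $g_n(x)$ are $g_{2m}(x)=\prod_{i=0}^{m-1}(x^2-[2i]^2)$ and $g_{2m+1}(x)=x\prod_{i=1}^m(x^2-[2i]^2)$, and $g^{(n)}=g_n/[n]!$. *)

theory Defs
  imports "HOL-Computational_Algebra.Formal_Laurent_Series"
begin

text \<open>We work in the field Q((q)) of formal Laurent series over the rationals, which
contains the rational function field Q(q); the indeterminate q is fls_X.
q^n for integer n is fls_X_intpow n.\<close>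

definition qint :: "int \<Rightarrow> rat fls" where
  "qint n = (fls_X_intpow n - fls_X_intpow (- n)) / (fls_X_intpow 1 - fls_X_intpow (- 1))"

definition qfact :: "nat \<Rightarrow> rat fls" where
  "qfact n = (\<Prod>i\<in>{1..n}. qint (int i))"

definition gpoly :: "nat \<Rightarrow> rat fls \<Rightarrow> rat fls" where
  "gpoly n x =
     (if even n then (\<Prod>i\<in>{0..<n div 2}. x^2 - (qint (2 * int i))^2)
      else x * (\<Prod>i\<in>{1..n div 2}. x^2 - (qint (2 * int i))^2))"

definition gdiv :: "nat \<Rightarrow> rat fls \<Rightarrow> rat fls" where
  "gdiv n x = gpoly n x / qfact n"

definition int_laurent_poly :: "rat fls \<Rightarrow> bool" where
  "int_laurent_poly f \<longleftrightarrow> finite {m. fls_nth f m \<noteq> 0} \<and> (\<forall>m. fls_nth f m \<in> \<int>)"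

end

theory Submission
  imports Defs
begin

text \<open>
  Write k = [2l]. Since k^2 - [2i]^2 = [2(l-i)] [2(l+i)], the value g_(2m+1)(k) is the product
  [2(l+m)] [2(l+m-1)] ... [2(l-m)] of 2m+1 consecutive even quantum integers, and
  g_(2m+2)(k) = k g_(2m+1)(k). As [2i] = [i] (q^i + q^-i), the product [2][4]...[2n] is [n]!
  times a Laurent polynomial. Hence g^(2m+1)(k) is a Laurent polynomial times a Gaussian
  binomial coefficient in q^2, which lies in Z[q,q^-1] by the q-Pascal rule, applied upwards
  and downwards in the (possibly negative) upper argument. In the even case the identity
  [2(l+m+1)] + [2(l-m-1)] = k (q^(2m+2) + q^-(2m+2)) makes g^(2m+2)(k) a Laurent polynomial
  times a sum of two such binomial coefficients.
\<close>

definition qnum :: "'a::field \<Rightarrow> int \<Rightarrow> 'a" where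
  "qnum q n = (q powi n - q powi (- n)) / (q - inverse q)"

lemma qint_eq_qnum: "qint n = qnum fls_X n"
  by (simp only: qint_def qnum_def flip: fls_X_power_int) (simp add: power_int_minus)

lemma qnum_diff_squares:
  assumes "q \<noteq> 0"
  shows "qnum q a ^ 2 - qnum q b ^ 2 = qnum q (a - b) * qnum q (a + b)"
proof (cases "q - inverse q = 0")
  case False
  define d where "d = q - inverse q"
  have eq: "qnum q n = (q powi n - q powi (- n)) / d" for n
    by (simp add: qnum_def d_def)
  show ?thesis using assms False unfolding eq d_def[symmetric]
    by (simp add: power_int_diff power_int_add power_int_minus field_simps power2_eq_square)
qed (simp add: qnum_def)

lemma qnum_split:
  assumes "q \<noteq> 0"
  shows "qnum q n = q powi (- k) * qnum q (n - k) + q powi (n - k) * qnum q k"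
proof (cases "q - inverse q = 0")
  case False
  define d where "d = q - inverse q"
  have eq: "qnum q n = (q powi n - q powi (- n)) / d" for n
    by (simp add: qnum_def d_def)
  show ?thesis using assms False unfolding eq d_def[symmetric]
    by (simp add: power_int_diff power_int_add power_int_minus field_simps)
qed (simp add: qnum_def)

lemma qnum_add_qnum_diff:
  assumes "q \<noteq> 0"
  shows "qnum q (a + b) + qnum q (a - b) = qnum q a * (q powi b + q powi (- b))"
proof (cases "q - inverse q = 0")
  case False
  define d where "d = q - inverse q"
  have eq: "qnum q n = (q powi n - q powi (- n)) / d" for n
    by (simp add: qnum_def d_def)
  show ?thesis using assms False unfolding eq d_def[symmetric]
    by (simp add: power_int_diff power_int_add power_int_minus field_simps)
qed (simp add: qnum_def)

lemma qnum_double: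
  assumes "q \<noteq> 0"
  shows "qnum q (2 * a) = qnum q a * (q powi a + q powi (- a))"
  using qnum_add_qnum_diff[OF assms, of a a] by (simp add: qnum_def flip: mult_2)

lemma qint_diff_squares: "qint a ^ 2 - qint b ^ 2 = qint (a - b) * qint (a + b)"
  unfolding qint_eq_qnum by (rule qnum_diff_squares) simp

lemma qint_split: "qint n = fls_X_intpow (- k) * qint (n - k) + fls_X_intpow (n - k) * qint k"
  unfolding qint_eq_qnum fls_X_power_int[symmetric] by (rule qnum_split) simp

lemma qint_add_qint_diff:
  "qint (a + b) + qint (a - b) = qint a * (fls_X_intpow b + fls_X_intpow (- b))"
  unfolding qint_eq_qnum fls_X_power_int[symmetric] by (rule qnum_add_qnum_diff) simp

lemma qint_double: "qint (2 * a) = qint a * (fls_X_intpow a + fls_X_intpow (- a))"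
  unfolding qint_eq_qnum fls_X_power_int[symmetric] by (rule qnum_double) simp

lemma fls_X_intpow_inj:
  "fls_X_intpow a = (fls_X_intpow b :: 'a::zero_neq_one fls) \<longleftrightarrow> a = b"
  by (metis fls_subdegree_fls_X_intpow)

lemma qint_nonzero: "a \<noteq> 0 \<Longrightarrow> qint a \<noteq> 0"
  by (simp only: qint_def divide_eq_0_iff right_minus_eq fls_X_intpow_inj) simp

lemma qint_0 [simp]: "qint 0 = 0"
  by (simp add: qint_def)

inductive_set int_laurent_polys :: "rat fls set" where
  int_laurent_polys_zero: "0 \<in> int_laurent_polys"
| int_laurent_polys_X_intpow: "fls_X_intpow i \<in> int_laurent_polys"
| int_laurent_polys_add:
    "a \<in> int_laurent_polys \<Longrightarrow> b \<in> int_laurent_polys \<Longrightarrow> a + b \<in> int_laurent_polys"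
| int_laurent_polys_uminus: "a \<in> int_laurent_polys \<Longrightarrow> - a \<in> int_laurent_polys"

lemma int_laurent_poly_if_in_int_laurent_polys:
  "f \<in> int_laurent_polys \<Longrightarrow> int_laurent_poly f"
proof (induction f rule: int_laurent_polys.induct)
  case (int_laurent_polys_X_intpow i)
  have "{m. fls_nth (fls_X_intpow i :: rat fls) m \<noteq> 0} \<subseteq> {i}" by auto
  then show ?case unfolding int_laurent_poly_def by (auto intro: finite_subset)
next
  case (int_laurent_polys_add a b)
  have "{m. fls_nth (a + b) m \<noteq> 0} \<subseteq> {m. fls_nth a m \<noteq> 0} \<union> {m. fls_nth b m \<noteq> 0}"
    by auto
  with int_laurent_polys_add show ?case unfolding int_laurent_poly_def by (auto intro: finite_subset)
qed (auto simp: int_laurent_poly_def)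

lemma int_laurent_polys_one: "1 \<in> int_laurent_polys"
  using int_laurent_polys_X_intpow[of 0] by simp

lemma int_laurent_polys_diff:
  "a \<in> int_laurent_polys \<Longrightarrow> b \<in> int_laurent_polys \<Longrightarrow> a - b \<in> int_laurent_polys"
  using int_laurent_polys_add int_laurent_polys_uminus by (metis diff_conv_add_uminus)

lemma int_laurent_polys_X_intpow_mult:
  "b \<in> int_laurent_polys \<Longrightarrow> fls_X_intpow i * b \<in> int_laurent_polys"
proof (induction b rule: int_laurent_polys.induct)
  case (int_laurent_polys_X_intpow j)
  then show ?case using int_laurent_polys.int_laurent_polys_X_intpow[of "i + j"]
    by (simp add: fls_X_intpow_times_fls_X_intpow)
qed (auto simp: distrib_left intro: int_laurent_polys.intros)

lemma int_laurent_polys_mult: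
  "a \<in> int_laurent_polys \<Longrightarrow> b \<in> int_laurent_polys \<Longrightarrow> a * b \<in> int_laurent_polys"
  by (induction a rule: int_laurent_polys.induct)
    (auto simp: distrib_right intro: int_laurent_polys.intros int_laurent_polys_X_intpow_mult)

lemma int_laurent_polys_prod:
  "(\<And>i. i \<in> A \<Longrightarrow> f i \<in> int_laurent_polys) \<Longrightarrow> prod f A \<in> int_laurent_polys"
  by (induction A rule: infinite_finite_induct)
    (auto intro: int_laurent_polys_one int_laurent_polys_mult)

definition even_qfalling :: "int \<Rightarrow> nat \<Rightarrow> rat fls" where
  "even_qfalling a k = (\<Prod>j<k. qint (2 * (a - int j)))"

definition even_qfact :: "nat \<Rightarrow> rat fls" where
  "even_qfact k = (\<Prod>i=1..k. qint (2 * int i))"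

text \<open>The Gaussian binomial coefficient in q^2, normalised to be invariant under q \<mapsto> 1/q.\<close>

definition even_qbinom :: "int \<Rightarrow> nat \<Rightarrow> rat fls" where
  "even_qbinom a k = even_qfalling a k / even_qfact k"

definition qsym_prod :: "nat \<Rightarrow> rat fls" where
  "qsym_prod k = (\<Prod>i=1..k. fls_X_intpow (int i) + fls_X_intpow (- int i))"

lemma even_qfalling_Suc: "even_qfalling a (Suc k) = even_qfalling a k * qint (2 * (a - int k))"
  by (simp add: even_qfalling_def)

lemma even_qfalling_Suc_shift:
  "even_qfalling (a + 1) (Suc k) = qint (2 * (a + 1)) * even_qfalling a k"
  unfolding even_qfalling_def prod.lessThan_Suc_shift by simp

lemma even_qfact_Suc: "even_qfact (Suc k) = even_qfact k * qint (2 * (int k + 1))"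
  by (simp add: even_qfact_def prod.cl_ivl_Suc add.commute)

lemma even_qfact_nonzero: "even_qfact k \<noteq> 0"
  by (simp add: even_qfact_def qint_nonzero)

lemma even_qbinom_0 [simp]: "even_qbinom a 0 = 1"
  by (simp add: even_qbinom_def even_qfalling_def even_qfact_def)

lemma even_qbinom_0_Suc [simp]: "even_qbinom 0 (Suc k) = 0"
  unfolding even_qbinom_def even_qfalling_def prod.lessThan_Suc_shift by simp

lemma even_qbinom_pascal:
  "even_qbinom (a + 1) (Suc k) =
     fls_X_intpow (- 2 * (int k + 1)) * even_qbinom a (Suc k)
       + fls_X_intpow (2 * (a - int k)) * even_qbinom a k"
proof -
  have split: "qint (2 * (a + 1)) =
      fls_X_intpow (- 2 * (int k + 1)) * qint (2 * (a - int k))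
        + fls_X_intpow (2 * (a - int k)) * qint (2 * (int k + 1))"
    using qint_split[of "2 * (a + 1)" "2 * (int k + 1)"] by (simp add: algebra_simps)
  have "qint (2 * (int k + 1)) \<noteq> 0"
    by (simp add: qint_nonzero)
  with even_qfact_nonzero show ?thesis
    unfolding even_qbinom_def even_qfalling_Suc_shift
    unfolding even_qfalling_Suc even_qfact_Suc split
    by (simp add: field_simps)
qed

lemma even_qbinom_pascal_down:
  "even_qbinom (a - 1) (Suc k) =
     fls_X_intpow (2 * (int k + 1)) *
       (even_qbinom a (Suc k) - fls_X_intpow (2 * (a - 1 - int k)) * even_qbinom (a - 1) k)"
proof -
  have inv: "fls_X_intpow (2 * (int k + 1)) * fls_X_intpow (- 2 * (int k + 1)) = (1 :: rat fls)"
    by (simp only: fls_X_intpow_times_fls_X_intpow) simp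
  have "even_qbinom a (Suc k) =
      fls_X_intpow (- 2 * (int k + 1)) * even_qbinom (a - 1) (Suc k)
        + fls_X_intpow (2 * (a - 1 - int k)) * even_qbinom (a - 1) k"
    using even_qbinom_pascal[of "a - 1" k] by simp
  then show ?thesis
    by (simp only: add_diff_cancel mult.assoc[symmetric] inv mult_1)
qed

lemma even_qbinom_in_int_laurent_polys: "even_qbinom a k \<in> int_laurent_polys"
proof (induction k arbitrary: a)
  case 0
  show ?case by (simp add: int_laurent_polys_one)
next
  case (Suc k)
  show ?case
  proof (induction a rule: int_induct[where k = 0])
    case base
    show ?case by (simp add: int_laurent_polys_zero)
  next
    case (step1 a)
    show ?case unfolding even_qbinom_pascal
      by (intro int_laurent_polys_add int_laurent_polys_X_intpow_mult step1(2) Suc.IH)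
  next
    case (step2 a)
    show ?case unfolding even_qbinom_pascal_down
      by (intro int_laurent_polys_diff int_laurent_polys_X_intpow_mult step2(2) Suc.IH)
  qed
qed

lemma qsym_prod_in_int_laurent_polys: "qsym_prod k \<in> int_laurent_polys"
  unfolding qsym_prod_def
  by (intro int_laurent_polys_prod int_laurent_polys_add int_laurent_polys_X_intpow)

lemma qsym_prod_Suc:
  "qsym_prod (Suc k) = qsym_prod k * (fls_X_intpow (int k + 1) + fls_X_intpow (- (int k + 1)))"
  by (simp add: qsym_prod_def prod.cl_ivl_Suc add.commute)

lemma even_qfact_eq_qfact_qsym_prod: "even_qfact k = qfact k * qsym_prod k"
  unfolding even_qfact_def qfact_def qsym_prod_def prod.distrib[symmetric]
  by (rule prod.cong) (simp_all add: qint_double)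

lemma qsym_prod_nonzero: "qsym_prod k \<noteq> 0"
  using even_qfact_nonzero[of k] by (auto simp: even_qfact_eq_qfact_qsym_prod)

lemma gpoly_Suc_odd:
  "gpoly (2 * Suc m + 1) x = gpoly (2 * m + 1) x * (x ^ 2 - qint (2 * (int m + 1)) ^ 2)"
  by (simp add: gpoly_def add.commute)

lemma gpoly_Suc_even: "gpoly (2 * m + 2) x = x * gpoly (2 * m + 1) x"
proof -
  have "{0..<Suc m} = insert 0 {1..m}" by auto
  then show ?thesis by (simp add: gpoly_def power2_eq_square)
qed

lemma gpoly_odd_qint_even:
  "gpoly (2 * m + 1) (qint (2 * l)) = even_qfalling (l + int m) (2 * m + 1)"
proof (induction m)
  case 0
  show ?case by (simp add: gpoly_def even_qfalling_def)
next
  case (Suc m)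
  have diff_squares:
    "qint (2 * l) ^ 2 - qint (2 * (int m + 1)) ^ 2
       = qint (2 * (l - int m - 1)) * qint (2 * (l + int m + 1))"
    using qint_diff_squares[of "2 * l" "2 * (int m + 1)"] by (simp add: algebra_simps)
  have falling: "even_qfalling (l + int (Suc m)) (2 * Suc m + 1) =
      qint (2 * (l + int m + 1)) * (even_qfalling (l + int m) (2 * m + 1) * qint (2 * (l - int m - 1)))"
    using even_qfalling_Suc_shift[of "l + int m" "Suc (2 * m + 1)"]
      even_qfalling_Suc[of "l + int m" "2 * m + 1"]
    by (simp add: algebra_simps)
  have "gpoly (2 * Suc m + 1) (qint (2 * l)) =
      gpoly (2 * m + 1) (qint (2 * l)) * (qint (2 * l) ^ 2 - qint (2 * (int m + 1)) ^ 2)"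
    by (rule gpoly_Suc_odd)
  also have "\<dots> = even_qfalling (l + int m) (2 * m + 1)
      * (qint (2 * (l - int m - 1)) * qint (2 * (l + int m + 1)))"
    by (simp only: Suc.IH diff_squares)
  also have "\<dots> = even_qfalling (l + int (Suc m)) (2 * Suc m + 1)"
    unfolding falling by (simp only: ac_simps)
  finally show ?case .
qed

lemma gdiv_odd_qint_even:
  "gdiv (2 * m + 1) (qint (2 * l)) = even_qbinom (l + int m) (2 * m + 1) * qsym_prod (2 * m + 1)"
  unfolding gdiv_def gpoly_odd_qint_even even_qbinom_def even_qfact_eq_qfact_qsym_prod
  by (simp add: qsym_prod_nonzero)

lemma gdiv_even_qint_even:
  "gdiv (2 * m + 2) (qint (2 * l)) =
     qsym_prod (2 * m + 1) * (even_qbinom (l + int m + 1) (2 * m + 2) + even_qbinom (l + int m) (2 * m + 2))"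
proof -
  define N where "N = even_qfalling (l + int m) (2 * m + 1)"
  define s :: "rat fls"
    where "s = fls_X_intpow (int (2 * m + 1) + 1) + fls_X_intpow (- (int (2 * m + 1) + 1))"
  have "even_qfalling (l + int m + 1) (2 * m + 2) + even_qfalling (l + int m) (2 * m + 2) =
      N * (qint (2 * (l + int m + 1)) + qint (2 * (l - int m - 1)))"
    using even_qfalling_Suc_shift[of "l + int m" "2 * m + 1"]
      even_qfalling_Suc[of "l + int m" "2 * m + 1"]
    by (simp add: N_def algebra_simps)
  also have "qint (2 * (l + int m + 1)) + qint (2 * (l - int m - 1)) = qint (2 * l) * s"
    using qint_add_qint_diff[of "2 * l" "int (2 * m + 1) + 1"] by (simp add: s_def algebra_simps)
  finally have falling_sum:
    "even_qfalling (l + int m + 1) (2 * m + 2) + even_qfalling (l + int m) (2 * m + 2)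
       = N * (qint (2 * l) * s)" .
  have fact: "even_qfact (2 * m + 2) = qfact (2 * m + 2) * (qsym_prod (2 * m + 1) * s)"
    using qsym_prod_Suc[of "2 * m + 1"] by (simp add: even_qfact_eq_qfact_qsym_prod s_def)
  have "s \<noteq> 0"
    using qsym_prod_nonzero[of "2 * m + 2"] qsym_prod_Suc[of "2 * m + 1"] by (auto simp: s_def)
  have "gdiv (2 * m + 2) (qint (2 * l)) = N * qint (2 * l) / qfact (2 * m + 2)"
    unfolding gdiv_def gpoly_Suc_even gpoly_odd_qint_even N_def by (simp only: mult.commute)
  also have "\<dots> = N * (qint (2 * l) * s) / (qfact (2 * m + 2) * (qsym_prod (2 * m + 1) * s))
      * qsym_prod (2 * m + 1)"
    using \<open>s \<noteq> 0\<close> qsym_prod_nonzero by simp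
  also have "\<dots> = qsym_prod (2 * m + 1)
      * (even_qbinom (l + int m + 1) (2 * m + 2) + even_qbinom (l + int m) (2 * m + 2))"
    unfolding even_qbinom_def add_divide_distrib[symmetric] falling_sum fact by (rule mult.commute)
  finally show ?thesis .
qed

theorem lemma2p5:
  fixes l :: int and n :: nat
  shows "int_laurent_poly (gdiv n (qint (2 * l)))"
proof (rule int_laurent_poly_if_in_int_laurent_polys)
  have "n = 0 \<or> (\<exists>m. n = 2 * m + 1) \<or> (\<exists>m. n = 2 * m + 2)"
    by presburger
  then consider "n = 0" | m where "n = 2 * m + 1" | m where "n = 2 * m + 2"
    by blast
  then show "gdiv n (qint (2 * l)) \<in> int_laurent_polys"
  proof cases
    case 1
    show ?thesis unfolding 1 by (simp add: gdiv_def gpoly_def qfact_def int_laurent_polys_one)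
  next
    case (2 m)
    show ?thesis unfolding 2 gdiv_odd_qint_even
      by (intro int_laurent_polys_mult even_qbinom_in_int_laurent_polys qsym_prod_in_int_laurent_polys)
  next
    case (3 m)
    show ?thesis unfolding 3 gdiv_even_qint_even
      by (intro int_laurent_polys_mult int_laurent_polys_add even_qbinom_in_int_laurent_polys
          qsym_prod_in_int_laurent_polys)
  qed
qed

end
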